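(* Say that $g\in L^2(\mathbb{R})$ satisfies $(\ast)$ if there is $C>0$ with $$\int_{|t|\geq R}|g(t)|^2dt+\int_{|\xi|\geq L}|\hat g(\xi)|^2d\xi\geq\frac{C}{RL}\quad\text{for all }R,L\geq1,$$ and satisfies $(\ast\ast)$ if $\sum_{n\in\mathbb{Z}}\|g\|_{L^\infty[n,n+1]}=\infty$ or $\sum_{n\in\mathbb{Z}}\|\hat g\|_{L^\infty[n,n+1]}=\infty$. Then there exists $g\in L^2(\mathbb{R})$ satisfying $(\ast)$ but not $(\ast\ast)$, and there exists $g\in L^2(\mathbb{R})$ satisfying $(\ast\ast)$ but not $(\ast)$.
   Context: $\hat g(\xi)=\int g(t)e^{-2\pi i\xi t}dt$ denotes the Fourier transform, extended to $L^2(\mathbb{R})$. *)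

theory Defs
  imports "HOL-Analysis.Analysis"
begin

definition square_integrable :: "(real \<Rightarrow> complex) \<Rightarrow> bool" where
  "square_integrable g \<longleftrightarrow> g \<in> borel_measurable lborel \<and>
     (\<integral>\<^sup>+ t. ennreal (norm (g t)) ^ 2 \<partial>lborel) < \<infinity>"

definition fourier_trunc :: "(real \<Rightarrow> complex) \<Rightarrow> real \<Rightarrow> real \<Rightarrow> complex" where
  "fourier_trunc g N \<xi> = (LINT t:{-N..N}|lborel. g t * cis (- 2 * pi * \<xi> * t))"

text \<open>G is (a representative of) the L^2 Fourier transform of g: the L^2 limit of the
  truncated Fourier integrals (Plancherel extension).\<close>
definition is_L2_fourier :: "(real \<Rightarrow> complex) \<Rightarrow> (real \<Rightarrow> complex) \<Rightarrow> bool" where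
  "is_L2_fourier g G \<longleftrightarrow> square_integrable G \<and>
     ((\<lambda>N. \<integral>\<^sup>+ \<xi>. ennreal (norm (G \<xi> - fourier_trunc g N \<xi>)) ^ 2 \<partial>lborel) \<longlongrightarrow> 0) at_top"

text \<open>Essential supremum of |f| on [a,b] (the L^infinity[a,b] norm), as an ennreal.\<close>
definition Linf_norm_on :: "(real \<Rightarrow> complex) \<Rightarrow> real \<Rightarrow> real \<Rightarrow> ennreal" where
  "Linf_norm_on f a b = Inf {M. AE t in lborel. t \<in> {a..b} \<longrightarrow> ennreal (norm (f t)) \<le> M}"

definition cond_star :: "(real \<Rightarrow> complex) \<Rightarrow> (real \<Rightarrow> complex) \<Rightarrow> bool" where
  "cond_star g G \<longleftrightarrow> (\<exists>C>0. \<forall>R L. R \<ge> 1 \<longrightarrow> L \<ge> 1 \<longrightarrow>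
     (\<integral>\<^sup>+ t. indicator {t. \<bar>t\<bar> \<ge> R} t * ennreal (norm (g t)) ^ 2 \<partial>lborel)
     + (\<integral>\<^sup>+ \<xi>. indicator {\<xi>. \<bar>\<xi>\<bar> \<ge> L} \<xi> * ennreal (norm (G \<xi>)) ^ 2 \<partial>lborel)
     \<ge> ennreal (C / (R * L)))"

definition cond_star_star :: "(real \<Rightarrow> complex) \<Rightarrow> (real \<Rightarrow> complex) \<Rightarrow> bool" where
  "cond_star_star g G \<longleftrightarrow>
     (\<integral>\<^sup>+ n. Linf_norm_on g (real_of_int n) (real_of_int n + 1) \<partial>count_space (UNIV :: int set)) = \<infinity>
   \<or> (\<integral>\<^sup>+ n. Linf_norm_on G (real_of_int n) (real_of_int n + 1) \<partial>count_space (UNIV :: int set)) = \<infinity>"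

end

theory Submission
  imports Defs "HOL-Library.Nat_Bijection" "HOL-Real_Asymp.Real_Asymp"
begin

text \<open>
  Both examples are series of modulated triangles
  g(t) = sum_k a_k tri_(b_k)(t) e^(2 pi i nu_k t), with a_k \<ge> 0, 0 < b_k \<le> 1 and
  sum_k a_k sqrt b_k < \<infinity>.  Such a g is supported in [-1,1], and its L^2 Fourier transform
  is the series of shifted Fejer kernels sum_k a_k F_(b_k)(xi - nu_k); in fact every
  truncated Fourier integral over [-N,N] with N \<ge> 1 already equals it.  Both L^2 norms
  are controlled by the overlap bounds  int tri_b tri_c \<le> 2 sqrt(bc)  and
  int F_b F_c \<le> 4 sqrt(bc).
\<close>

section \<open>The triangle function and the Fejer kernel\<close>

text \<open>The triangle of half-width b, and its Fourier transform
  (1 - cos (2 pi xi b)) / (2 pi^2 xi^2 b), the Fejer kernel.\<close>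

definition tri :: "real \<Rightarrow> real \<Rightarrow> real" where
  "tri b t = max 0 (1 - \<bar>t\<bar> / b)"

definition fejer :: "real \<Rightarrow> real \<Rightarrow> real" where
  "fejer b \<xi> = (if \<xi> = 0 then b else (1 - cos (2*pi*\<xi>*b)) / (2*pi^2*\<xi>^2*b))"

lemma tri_nonneg: "0 \<le> tri b t"
  by (simp add: tri_def)

lemma tri_le_1: "b > 0 \<Longrightarrow> tri b t \<le> 1"
  by (simp add: tri_def)

lemma tri_zero: "b > 0 \<Longrightarrow> b \<le> \<bar>t\<bar> \<Longrightarrow> tri b t = 0"
  by (auto simp: tri_def max_def field_simps)

text \<open>Away from the origin the triangle is small: this gives pointwise convergence
  of triangle series off a null set.\<close>
lemma tri_le_ratio:
  assumes "b > 0" "t \<noteq> 0" shows "tri b t \<le> b / \<bar>t\<bar>"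
proof (cases "b \<le> \<bar>t\<bar>")
  case True then show ?thesis using assms by (simp add: tri_zero)
next
  case False
  then have "1 \<le> b / \<bar>t\<bar>" using assms by simp
  then show ?thesis using tri_le_1[OF assms(1), of t] by linarith
qed

lemma tri_measurable[measurable]: "(\<lambda>t. tri b t) \<in> borel_measurable borel"
  unfolding tri_def by measurable

lemma cis_measurable[measurable]: "cis \<in> borel_measurable borel"
  by (rule borel_measurable_continuous_onI) (simp add: cis_conv_exp continuous_intros)

lemma tri_cis_set_integrable:
  "set_integrable lborel {a..c} (\<lambda>t. complex_of_real (tri b t) * cis (e * t))"
proof -
  have "continuous_on {a..c} (\<lambda>t. complex_of_real (tri b t) * cis (e * t))"
    unfolding tri_def cis_conv_exp divide_inverse by (intro continuous_intros)
  then show ?thesis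
    unfolding set_integrable_def by (intro borel_integrable_compact) auto
qed

lemma tri_antideriv_right:
  fixes w b :: real assumes "w \<noteq> 0" "b > 0"
  shows "((\<lambda>t. (1 - of_real t / of_real b) * (\<i> / of_real w) * exp (- \<i> * of_real w * of_real t)
          - exp (- \<i> * of_real w * of_real t) / (of_real b * of_real w ^ 2)) has_vector_derivative
        (complex_of_real (1 - t/b) * cis (- w * t))) (at t within S)"
proof -
  have "((\<lambda>z. (1 - z / of_real b) * (\<i> / of_real w) * exp (- \<i> * of_real w * z)
          - exp (- \<i> * of_real w * z) / (of_real b * of_real w ^ 2)) has_field_derivative
        (complex_of_real (1 - t/b) * cis (- w * t))) (at (of_real t))"
    using assms by (auto intro!: derivative_eq_intros simp: cis_conv_exp field_simps power2_eq_square)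
  then show ?thesis by (rule has_vector_derivative_real_field)
qed

lemma tri_antideriv_left:
  fixes w b :: real assumes "w \<noteq> 0" "b > 0"
  shows "((\<lambda>t. (1 + of_real t / of_real b) * (\<i> / of_real w) * exp (- \<i> * of_real w * of_real t)
          + exp (- \<i> * of_real w * of_real t) / (of_real b * of_real w ^ 2)) has_vector_derivative
        (complex_of_real (1 + t/b) * cis (- w * t))) (at t within S)"
proof -
  have "((\<lambda>z. (1 + z / of_real b) * (\<i> / of_real w) * exp (- \<i> * of_real w * z)
          + exp (- \<i> * of_real w * z) / (of_real b * of_real w ^ 2)) has_field_derivative
        (complex_of_real (1 + t/b) * cis (- w * t))) (at (of_real t))"
    using assms by (auto intro!: derivative_eq_intros simp: cis_conv_exp field_simps power2_eq_square)
  then show ?thesis by (rule has_vector_derivative_real_field)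
qed

lemma tri_antideriv_right_0:
  fixes b :: real assumes "b > 0"
  shows "((\<lambda>t. of_real t - of_real t ^ 2 / (2 * of_real b)) has_vector_derivative
        (complex_of_real (1 - t/b) * cis (- 0 * t))) (at t within S)"
proof -
  have "((\<lambda>z. z - z ^ 2 / (2 * of_real b)) has_field_derivative
        (complex_of_real (1 - t/b) * cis (- 0 * t))) (at (of_real t))"
    using assms by (auto intro!: derivative_eq_intros simp: field_simps power2_eq_square)
  then show ?thesis by (rule has_vector_derivative_real_field)
qed

lemma tri_antideriv_left_0:
  fixes b :: real assumes "b > 0"
  shows "((\<lambda>t. of_real t + of_real t ^ 2 / (2 * of_real b)) has_vector_derivative
        (complex_of_real (1 + t/b) * cis (- 0 * t))) (at t within S)"
proof -
  have "((\<lambda>z. z + z ^ 2 / (2 * of_real b)) has_field_derivative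
        (complex_of_real (1 + t/b) * cis (- 0 * t))) (at (of_real t))"
    using assms by (auto intro!: derivative_eq_intros simp: field_simps power2_eq_square)
  then show ?thesis by (rule has_vector_derivative_real_field)
qed

lemma tri_has_integral_by_halves:
  assumes b: "b > 0"
    and FR: "\<And>t. (FR has_vector_derivative (complex_of_real (1 - t/b) * cis (- w * t))) (at t within {0..b})"
    and FL: "\<And>t. (FL has_vector_derivative (complex_of_real (1 + t/b) * cis (- w * t))) (at t within {-b..0})"
  shows "((\<lambda>t. complex_of_real (tri b t) * cis (- w * t))
           has_integral (FL 0 - FL (-b) + (FR b - FR 0))) {-b..b}"
proof -
  let ?h = "\<lambda>t. complex_of_real (tri b t) * cis (- w * t)"
  have right: "\<And>t. t \<in> {0..b} \<Longrightarrow> complex_of_real (1 - t/b) * cis (- w * t) = ?h t"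
    using b by (auto simp: tri_def max_def field_simps)
  have left: "\<And>t. t \<in> {-b..0} \<Longrightarrow> complex_of_real (1 + t/b) * cis (- w * t) = ?h t"
    using b by (auto simp: tri_def max_def field_simps)
  have "(?h has_integral (FR b - FR 0)) {0..b}"
    by (rule has_integral_eq[OF right], assumption)
       (rule fundamental_theorem_of_calculus, use b FR in auto)
  moreover have "(?h has_integral (FL 0 - FL (-b))) {-b..0}"
    by (rule has_integral_eq[OF left], assumption)
       (rule fundamental_theorem_of_calculus, use b FL in auto)
  ultimately show ?thesis
    by (intro has_integral_combine[where c=0]) (use b in auto)
qed

lemma tri_has_fourier_integral:
  assumes b: "b > 0"
  shows "((\<lambda>t. complex_of_real (tri b t) * cis (- (2*pi*\<xi>) * t))
           has_integral complex_of_real (fejer b \<xi>)) {-b..b}"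
proof (cases "\<xi> = 0")
  case True
  have "((\<lambda>t. complex_of_real (tri b t) * cis (- 0 * t)) has_integral
      ((0 + 0 ^ 2 / (2 * of_real b)) - (of_real (-b) + of_real (-b) ^ 2 / (2 * of_real b))
       + ((of_real b - of_real b ^ 2 / (2 * of_real b)) - (0 - 0 ^ 2 / (2 * of_real b))))) {-b..b}"
    using tri_has_integral_by_halves[OF b tri_antideriv_right_0[OF b] tri_antideriv_left_0[OF b]]
    by simp
  then show ?thesis using b True
    by (simp add: fejer_def power2_eq_square field_simps)
next
  case False
  define w where "w = 2*pi*\<xi>"
  then have w: "w \<noteq> 0" using False by simp
  define FR where "FR = (\<lambda>t. (1 - of_real t / of_real b) * (\<i> / of_real w) * exp (- \<i> * of_real w * of_real t)
        - exp (- \<i> * of_real w * of_real t) / (of_real b * of_real w ^ 2) :: complex)"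
  define FL where "FL = (\<lambda>t. (1 + of_real t / of_real b) * (\<i> / of_real w) * exp (- \<i> * of_real w * of_real t)
        + exp (- \<i> * of_real w * of_real t) / (of_real b * of_real w ^ 2) :: complex)"
  have I: "((\<lambda>t. complex_of_real (tri b t) * cis (- w * t))
      has_integral (FL 0 - FL (-b) + (FR b - FR 0))) {-b..b}"
    unfolding FL_def FR_def
    by (rule tri_has_integral_by_halves[OF b tri_antideriv_right[OF w b] tri_antideriv_left[OF w b]])
  have e1: "exp (- \<i> * of_real w * of_real b) = cis (- (w*b))"
    by (simp add: cis_conv_exp mult.assoc)
  have e2: "exp (- \<i> * of_real w * of_real (-b)) = cis (w*b)"
    by (simp add: cis_conv_exp mult.assoc)
  have "FL 0 - FL (-b) + (FR b - FR 0) = (2 - cis (w*b) - cis (-(w*b))) / (of_real b * of_real w ^ 2)"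
    unfolding FL_def FR_def e1 e2 using b w by (simp add: field_simps)
  also have "\<dots> = complex_of_real ((2 - 2 * cos (w*b)) / (b * w^2))"
    by (simp add: cis.code complex_eq_iff)
  also have "\<dots> = complex_of_real (fejer b \<xi>)"
    using False b by (simp add: fejer_def w_def power2_eq_square field_simps)
  finally show ?thesis using I by (simp add: w_def)
qed

text \<open>The same identity in the form used by truncated Fourier integrals: for N \<ge> b the
  window [-N,N] contains the whole support of the triangle.\<close>
lemma tri_fourier_trunc:
  assumes b: "b > 0" "b \<le> N"
  shows "(\<integral>t. indicator {-N..N} t *\<^sub>R (complex_of_real (tri b t) * cis (- (2*pi*\<xi>) * t)) \<partial>lborel)
      = complex_of_real (fejer b \<xi>)"
proof -
  let ?h = "\<lambda>t. complex_of_real (tri b t) * cis (- (2*pi*\<xi>) * t)"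
  have "(?h has_integral complex_of_real (fejer b \<xi>)) {-N..N}"
    by (rule has_integral_on_superset[OF tri_has_fourier_integral[OF b(1)]])
       (use b in \<open>auto simp: tri_zero\<close>)
  moreover have "(LINT t:{-N..N}|lborel. ?h t) = integral {-N..N} ?h"
    by (rule set_borel_integral_eq_integral(2)[OF tri_cis_set_integrable])
  ultimately show ?thesis by (simp add: integral_unique set_lebesgue_integral_def)
qed

text \<open>A modulated triangle has L^1 norm b (the value of its transform at 0).\<close>
lemma tri_L1_norm:
  assumes b: "b > 0" "b \<le> N"
  shows "(\<integral>t. norm (indicator {-N..N} t *\<^sub>R (complex_of_real (tri b t) * cis (e * t))) \<partial>lborel) = b"
proof -
  have "complex_of_real (\<integral>t. norm (indicator {-N..N} t *\<^sub>R (complex_of_real (tri b t) * cis (e * t))) \<partial>lborel)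
     = (\<integral>t. indicator {-N..N} t *\<^sub>R (complex_of_real (tri b t) * cis (- (2*pi*0) * t)) \<partial>lborel)"
    by (subst integral_complex_of_real[symmetric], rule Bochner_Integration.integral_cong)
       (simp_all add: norm_mult tri_nonneg scaleR_conv_of_real)
  also have "\<dots> = complex_of_real b"
    using tri_fourier_trunc[OF b, of 0] by (simp add: fejer_def)
  finally show ?thesis by simp
qed

lemma fejer_nonneg: "b > 0 \<Longrightarrow> 0 \<le> fejer b \<xi>"
  by (simp add: fejer_def)

lemma fejer_measurable[measurable]: "fejer b \<in> borel_measurable borel"
  unfolding fejer_def by measurable

lemma one_minus_cos_le: "1 - cos (x::real) \<le> x^2 / 2"
proof -
  have "1 - cos x = 2 * (sin (x/2))^2"
    using cos_double_sin[of "x/2"] by simp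
  moreover have "(sin (x/2))^2 \<le> (x/2)^2"
    using abs_sin_x_le_abs_x[of "x/2"] by (metis abs_le_square_iff)
  ultimately show ?thesis by (simp add: power2_eq_square field_simps)
qed

lemma fejer_le: assumes "b > 0" shows "fejer b \<xi> \<le> b"
proof (cases "\<xi> = 0")
  case False
  have "1 - cos (2*pi*\<xi>*b) \<le> (2*pi*\<xi>*b)^2/2" by (rule one_minus_cos_le)
  then have "1 - cos (2*pi*\<xi>*b) \<le> b * (2*pi^2*\<xi>^2*b)" by (simp add: power2_eq_square field_simps)
  moreover have "0 < 2*pi^2*\<xi>^2*b" using False assms by simp
  ultimately show ?thesis using False by (simp add: fejer_def divide_le_eq)
qed (simp add: fejer_def)

lemma fejer_le_decay: assumes "b > 0" "\<xi> \<noteq> 0" shows "fejer b \<xi> \<le> 1 / (\<xi>^2 * b)"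
proof -
  have "1 * 1 \<le> pi * pi" using pi_gt3 by (intro mult_mono) auto
  then have "1 \<le> pi^2" by (simp add: power2_eq_square)
  moreover have "1 - cos (2*pi*\<xi>*b) \<le> 2" using cos_ge_minus_one[of "2*pi*\<xi>*b"] by linarith
  ultimately have "1 - cos (2*pi*\<xi>*b) \<le> (1 / (\<xi>^2 * b)) * (2*pi^2*\<xi>^2*b)"
    using assms by (simp add: field_simps)
  moreover have "0 < 2*pi^2*\<xi>^2*b" using assms by simp
  ultimately show ?thesis using assms by (simp add: fejer_def divide_le_eq)
qed

lemma fejer_lower: assumes "1/4 \<le> \<xi>" "\<xi> \<le> 1/2" shows "1/8 \<le> fejer 1 \<xi>"
proof -
  have "cos (2*pi*\<xi>) = - sin (2*pi*\<xi> - pi/2)" by (simp add: sin_diff)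
  also have "\<dots> \<le> 0"
    using assms by (intro neg_le_0_iff_le[THEN iffD2] sin_ge_zero) (auto simp: field_simps)
  finally have cos_le: "cos (2*pi*\<xi>) \<le> 0" .
  have "\<xi>*\<xi> \<le> (1/2)*(1/2)" using assms by (intro mult_mono) auto
  then have "\<xi>^2 \<le> 1/4" by (simp add: power2_eq_square)
  moreover have "pi*pi \<le> 4*4" using pi_less_4 pi_gt3 by (intro mult_mono) auto
  then have "pi^2 \<le> 16" by (simp add: power2_eq_square)
  ultimately have "pi^2 * \<xi>^2 \<le> 16 * (1/4)" by (intro mult_mono) auto
  moreover have "0 < 2*pi^2*\<xi>^2" using assms by simp
  ultimately have "1/8 \<le> (1 - cos (2*pi*\<xi>)) / (2*pi^2*\<xi>^2)"
    using cos_le by (simp add: le_divide_eq)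
  then show ?thesis using assms by (simp add: fejer_def)
qed

section \<open>Integral bounds for the kernels\<close>

lemma min_le_sqrt_mult:
  fixes b c :: real assumes "0 \<le> b" "0 \<le> c" shows "min b c \<le> sqrt b * sqrt c"
proof -
  have "min b c * min b c \<le> b * c" using assms by (intro mult_mono) auto
  then have "sqrt (min b c * min b c) \<le> sqrt (b * c)" by (rule real_sqrt_le_mono)
  then show ?thesis using assms by (simp add: real_sqrt_mult)
qed

text \<open>Two triangles overlap only on the support of the narrower one.\<close>
lemma tri_product_integral:
  assumes "0 < b" "0 < c"
  shows "(\<integral>\<^sup>+t. ennreal (tri b t) * ennreal (tri c t) \<partial>lborel) \<le> ennreal (2 * (sqrt b * sqrt c))"
proof -
  define m where "m = min b c"
  have "(\<integral>\<^sup>+t. ennreal (tri b t) * ennreal (tri c t) \<partial>lborel) \<le> (\<integral>\<^sup>+t. indicator {-m..m} t \<partial>lborel)"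
  proof (rule nn_integral_mono)
    fix t
    show "ennreal (tri b t) * ennreal (tri c t) \<le> indicator {-m..m} t"
    proof (cases "t \<in> {-m..m}")
      case True
      have "tri b t * tri c t \<le> 1 * 1" using assms
        by (intro mult_mono) (auto simp: tri_le_1 tri_nonneg)
      then show ?thesis using True by (simp add: ennreal_mult[symmetric] tri_nonneg)
    next
      case False
      then have "b \<le> \<bar>t\<bar> \<or> c \<le> \<bar>t\<bar>" by (auto simp: m_def min_def split: if_splits)
      then have "tri b t = 0 \<or> tri c t = 0" using assms by (auto simp: tri_zero)
      then show ?thesis by auto
    qed
  qed
  also have "\<dots> = ennreal (2 * m)"
    using assms by (auto simp: emeasure_lborel_Icc_eq m_def min_def)
  also have "\<dots> \<le> ennreal (2 * (sqrt b * sqrt c))"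
    using min_le_sqrt_mult[of b c] assms by (intro ennreal_leI) (simp add: m_def)
  finally show ?thesis .
qed

lemma tail_integral_even:
  fixes f :: "real \<Rightarrow> real"
  assumes [measurable]: "f \<in> borel_measurable borel" and even: "\<And>x. f (-x) = f x" and a: "a > 0"
  shows "(\<integral>\<^sup>+\<xi>. indicator {\<xi>. a \<le> \<bar>\<xi>\<bar>} \<xi> * ennreal (f \<xi>) \<partial>lborel)
       = 2 * (\<integral>\<^sup>+\<xi>. ennreal (f \<xi>) * indicator {a..} \<xi> \<partial>lborel)"
proof -
  let ?h = "\<lambda>\<xi>. ennreal (f \<xi>) * indicator {a..} \<xi>"
  have split: "indicator {\<xi>. a \<le> \<bar>\<xi>\<bar>} \<xi> * ennreal (f \<xi>) = ?h \<xi> + ?h (0 + (-1) * \<xi>)" for \<xi>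
    using a even[of \<xi>] by (auto simp: indicator_def)
  have reflect: "(\<integral>\<^sup>+\<xi>. ennreal (f (-\<xi>)) * indicator {a..} (-\<xi>) \<partial>lborel) = (\<integral>\<^sup>+\<xi>. ?h \<xi> \<partial>lborel)"
    using nn_integral_real_affine[of ?h "-1" 0] by simp
  show ?thesis
    unfolding split by (subst nn_integral_add) (auto simp: reflect mult_2 simp del: even)
qed

lemma tail_integral_inverse_square:
  assumes a: "a > 0"
  shows "(\<integral>\<^sup>+\<xi>. indicator {\<xi>. a \<le> \<bar>\<xi>\<bar>} \<xi> * ennreal (1 / \<xi>^2) \<partial>lborel) = ennreal (2 / a)"
proof -
  have "(\<integral>\<^sup>+\<xi>. ennreal (1 / \<xi>^2) * indicator {a..} \<xi> \<partial>lborel) = 0 - (- 1 / a)"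
  proof (rule nn_integral_FTC_atLeast)
    show "((\<lambda>x::real. - 1 / x) \<longlongrightarrow> 0) at_top" by real_asymp
    fix x assume "a \<le> x"
    then show "((\<lambda>x::real. - 1 / x) has_real_derivative 1 / x^2) (at x)"
      using a by (auto intro!: derivative_eq_intros simp: power2_eq_square)
  qed auto
  then show ?thesis
    by (subst tail_integral_even) (use a in \<open>auto simp: numeral_mult_ennreal\<close>)
qed

lemma tail_integral_inverse_fourth:
  assumes a: "a > 0"
  shows "(\<integral>\<^sup>+\<xi>. indicator {\<xi>. a \<le> \<bar>\<xi>\<bar>} \<xi> * ennreal (1 / \<xi>^4) \<partial>lborel) = ennreal (2 / (3 * a^3))"
proof -
  have "(\<integral>\<^sup>+\<xi>. ennreal (1 / \<xi>^4) * indicator {a..} \<xi> \<partial>lborel) = 0 - (- 1 / (3 * a^3))"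
  proof (rule nn_integral_FTC_atLeast)
    show "((\<lambda>x::real. - 1 / (3 * x^3)) \<longlongrightarrow> 0) at_top" by real_asymp
    fix x assume "a \<le> x"
    then show "((\<lambda>x::real. - 1 / (3 * x^3)) has_real_derivative 1 / x^4) (at x)"
      using a by (auto intro!: derivative_eq_intros simp: field_simps eval_nat_numeral)
  qed auto
  then show ?thesis
    by (subst tail_integral_even) (use a in \<open>auto simp: numeral_mult_ennreal\<close>)
qed

text \<open>The Fejer kernel (shifted arbitrarily) has integral at most 4: split into the
  central bump of height b and the 1/(xi^2 b) tails.\<close>
lemma fejer_integral_le:
  assumes b: "b > 0"
  shows "(\<integral>\<^sup>+\<xi>. ennreal (fejer b (\<xi> - s)) \<partial>lborel) \<le> 4"
proof -
  have bound: "ennreal (fejer b \<xi>) \<le> ennreal b * indicator {-1/b..1/b} \<xi>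
     + ennreal (1/b) * (indicator {\<xi>. 1/b \<le> \<bar>\<xi>\<bar>} \<xi> * ennreal (1/\<xi>^2))" for \<xi>
  proof (cases "\<bar>\<xi>\<bar> \<le> 1/b")
    case True
    then have "ennreal (fejer b \<xi>) \<le> ennreal b * indicator {-1/b..1/b} \<xi>"
      using fejer_le[OF b, of \<xi>] by (auto simp: indicator_def intro!: ennreal_leI)
    then show ?thesis by (rule order_trans) simp
  next
    case False
    then have "\<xi> \<noteq> 0" "1/b \<le> \<bar>\<xi>\<bar>" using b by auto
    then have "fejer b \<xi> \<le> (1/b) * (1/\<xi>^2)" using fejer_le_decay[OF b] by (simp add: field_simps)
    then have "ennreal (fejer b \<xi>) \<le> ennreal (1/b) * (indicator {\<xi>. 1/b \<le> \<bar>\<xi>\<bar>} \<xi> * ennreal (1/\<xi>^2))"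
      using \<open>1/b \<le> \<bar>\<xi>\<bar>\<close> b by (simp add: ennreal_mult[symmetric] ennreal_leI)
    then show ?thesis by (rule order_trans) simp
  qed
  have "(\<integral>\<^sup>+\<xi>. ennreal (fejer b (\<xi> - s)) \<partial>lborel) = (\<integral>\<^sup>+\<xi>. ennreal (fejer b \<xi>) \<partial>lborel)"
    using nn_integral_real_affine[of "\<lambda>\<xi>. ennreal (fejer b (\<xi> - s))" 1 s] by simp
  also have "\<dots> \<le> (\<integral>\<^sup>+\<xi>. ennreal b * indicator {-1/b..1/b} \<xi>
     + ennreal (1/b) * (indicator {\<xi>. 1/b \<le> \<bar>\<xi>\<bar>} \<xi> * ennreal (1/\<xi>^2)) \<partial>lborel)"
    by (rule nn_integral_mono) (rule bound)
  also have "\<dots> = ennreal b * ennreal (2/b) + ennreal (1/b) * ennreal (2 / (1/b))"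
    using b by (subst nn_integral_add) (auto simp: nn_integral_cmult tail_integral_inverse_square)
  also have "\<dots> = 4"
    using b by (simp add: ennreal_mult[symmetric] del: ennreal_numeral) (simp add: field_simps)
  finally show ?thesis .
qed

lemma fejer_product_integral:
  assumes "0 < b" "0 < c"
  shows "(\<integral>\<^sup>+\<xi>. ennreal (fejer b (\<xi> - s)) * ennreal (fejer c (\<xi> - s')) \<partial>lborel)
           \<le> ennreal (4 * (sqrt b * sqrt c))"
proof -
  have narrow: "(\<integral>\<^sup>+\<xi>. ennreal (fejer b (\<xi> - s)) * ennreal (fejer c (\<xi> - s')) \<partial>lborel) \<le> ennreal (4 * c)"
    if "0 < b" "0 < c" for b c s s'
  proof -
    have "(\<integral>\<^sup>+\<xi>. ennreal (fejer b (\<xi> - s)) * ennreal (fejer c (\<xi> - s')) \<partial>lborel)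
        \<le> (\<integral>\<^sup>+\<xi>. ennreal (fejer b (\<xi> - s)) * ennreal c \<partial>lborel)"
      using fejer_le[OF that(2)] by (intro nn_integral_mono mult_left_mono ennreal_leI) auto
    also have "\<dots> = (\<integral>\<^sup>+\<xi>. ennreal (fejer b (\<xi> - s)) \<partial>lborel) * ennreal c"
      by (simp add: nn_integral_multc)
    also have "\<dots> \<le> 4 * ennreal c"
      using fejer_integral_le[OF that(1)] by (intro mult_right_mono) auto
    finally show ?thesis using that by (simp add: ennreal_mult)
  qed
  have "(\<integral>\<^sup>+\<xi>. ennreal (fejer b (\<xi> - s)) * ennreal (fejer c (\<xi> - s')) \<partial>lborel) \<le> ennreal (4 * min b c)"
  proof (cases "c \<le> b")
    case True
    then show ?thesis using narrow[OF assms, of s s'] by (simp add: min_absorb2)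
  next
    case False
    then have "min b c = b" by simp
    then show ?thesis using narrow[OF assms(2,1), of s' s] by (simp add: mult.commute)
  qed
  also have "\<dots> \<le> ennreal (4 * (sqrt b * sqrt c))"
    using min_le_sqrt_mult[of b c] assms by (intro ennreal_leI) simp
  finally show ?thesis .
qed

lemma nn_integral_square_suminf_le:
  fixes f :: "nat \<Rightarrow> 'a \<Rightarrow> ennreal"
  assumes [measurable]: "\<And>i. f i \<in> borel_measurable M"
    and cross: "\<And>i j. (\<integral>\<^sup>+x. f i x * f j x \<partial>M) \<le> ennreal (c * (w i * w j))"
    and w: "\<And>i. 0 \<le> w i" "summable w" and c: "0 \<le> c"
  shows "(\<integral>\<^sup>+x. (\<Sum>i. f i x)^2 \<partial>M) \<le> ennreal (c * (\<Sum>i. w i)^2)"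
proof -
  have "(\<integral>\<^sup>+x. (\<Sum>i. f i x)^2 \<partial>M) = (\<integral>\<^sup>+x. (\<Sum>i. \<Sum>j. f i x * f j x) \<partial>M)"
    by (simp add: power2_eq_square)
  also have "\<dots> = (\<Sum>i. \<integral>\<^sup>+x. (\<Sum>j. f i x * f j x) \<partial>M)"
    by (rule nn_integral_suminf) measurable
  also have "\<dots> = (\<Sum>i. \<Sum>j. \<integral>\<^sup>+x. f i x * f j x \<partial>M)"
    by (subst nn_integral_suminf) auto
  also have "\<dots> \<le> (\<Sum>i. \<Sum>j. ennreal c * (ennreal (w i) * ennreal (w j)))"
    using cross w c
    by (intro suminf_le summableI) (simp_all add: ennreal_mult)
  also have "\<dots> = ennreal c * ((\<Sum>i. ennreal (w i)) * (\<Sum>j. ennreal (w j)))"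
    by simp
  also have "\<dots> = ennreal (c * (\<Sum>i. w i)^2)"
    using w c by (simp add: suminf_ennreal2 suminf_nonneg ennreal_mult power2_eq_square)
  finally show ?thesis .
qed

lemma ennreal_square_le:
  fixes x c y h :: real
  assumes "x^2 \<le> c * y + 2 * h^2" "0 \<le> x" "0 \<le> c" "0 \<le> y" "0 \<le> h"
  shows "ennreal x ^ 2 \<le> ennreal c * ennreal y + 2 * ennreal h ^ 2"
proof -
  have "ennreal x ^ 2 = ennreal (x^2)" using assms by (simp add: ennreal_power)
  also have "\<dots> \<le> ennreal (c * y + 2 * h^2)" by (rule ennreal_leI) (rule assms(1))
  also have "\<dots> = ennreal (c * y) + ennreal (2 * h^2)"
    by (rule ennreal_plus) (use assms in auto)
  also have "ennreal (c * y) = ennreal c * ennreal y"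
    by (rule ennreal_mult) (use assms in auto)
  also have "ennreal (2 * h^2) = 2 * ennreal h ^ 2"
    using assms by (simp add: ennreal_power numeral_mult_ennreal)
  finally show ?thesis .
qed

section \<open>Series of modulated triangles\<close>

definition tri_series :: "(nat \<Rightarrow> real) \<Rightarrow> (nat \<Rightarrow> real) \<Rightarrow> (nat \<Rightarrow> real) \<Rightarrow> real \<Rightarrow> complex" where
  "tri_series a b \<nu> t = (\<Sum>k. complex_of_real (a k * tri (b k) t) * cis (2*pi*\<nu> k*t))"

definition fejer_series :: "(nat \<Rightarrow> real) \<Rightarrow> (nat \<Rightarrow> real) \<Rightarrow> (nat \<Rightarrow> real) \<Rightarrow> real \<Rightarrow> real" where
  "fejer_series a b \<nu> \<xi> = (\<Sum>k. a k * fejer (b k) (\<xi> - \<nu> k))"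

lemma tri_series_measurable[measurable]: "tri_series a b \<nu> \<in> borel_measurable borel"
  unfolding tri_series_def by measurable

lemma fejer_series_measurable[measurable]: "fejer_series a b \<nu> \<in> borel_measurable borel"
  unfolding fejer_series_def by measurable

locale triangle_series =
  fixes a b :: "nat \<Rightarrow> real"
  assumes a_nonneg: "\<And>k. 0 \<le> a k"
    and b_pos: "\<And>k. 0 < b k"
    and b_le_1: "\<And>k. b k \<le> 1"
    and summable_weights: "summable (\<lambda>k. a k * sqrt (b k))"
begin

lemma shift: "triangle_series (\<lambda>k. a (k + m)) (\<lambda>k. b (k + m))"
proof
  show "summable (\<lambda>k. a (k + m) * sqrt (b (k + m)))"
    using summable_weights summable_iff_shift[of "\<lambda>k. a k * sqrt (b k)" m] by simp
qed (simp_all add: a_nonneg b_pos b_le_1)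

lemma weights_nonneg: "0 \<le> a k * sqrt (b k)"
  using a_nonneg[of k] b_pos[of k] by simp

text \<open>The L^1 norms a k * b k of the terms are summable, since b k \<le> sqrt (b k).\<close>
lemma summable_L1: "summable (\<lambda>k. a k * b k)"
proof (rule summable_comparison_test[OF _ summable_weights], intro exI allI impI)
  fix k
  have "b k * b k \<le> b k * 1" using b_pos[of k] b_le_1[of k] by (intro mult_left_mono) auto
  then have "b k \<le> sqrt (b k)" by (intro real_le_rsqrt) (simp add: power2_eq_square)
  then show "norm (a k * b k) \<le> a k * sqrt (b k)"
    using a_nonneg[of k] b_pos[of k] by (simp add: mult_left_mono)
qed

lemma summable_pointwise:
  assumes "t \<noteq> 0" shows "summable (\<lambda>k. a k * tri (b k) t)"
proof (rule summable_comparison_test[OF _ summable_mult2[OF summable_L1, of "1 / \<bar>t\<bar>"]], intro exI allI impI)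
  fix k
  show "norm (a k * tri (b k) t) \<le> a k * b k * (1 / \<bar>t\<bar>)"
    using mult_left_mono[OF tri_le_ratio[OF b_pos assms, of k] a_nonneg[of k]] a_nonneg[of k]
      tri_nonneg[of "b k" t] by simp
qed

lemma summable_spectrum: "summable (\<lambda>k. a k * fejer (b k) (\<xi> - \<nu> k))"
  by (rule summable_comparison_test[OF _ summable_L1])
     (auto intro!: mult_left_mono simp: a_nonneg b_pos fejer_le fejer_nonneg)

lemma fejer_series_nonneg: "0 \<le> fejer_series a b \<nu> \<xi>"
  unfolding fejer_series_def
  by (rule suminf_nonneg[OF summable_spectrum]) (simp add: a_nonneg b_pos fejer_nonneg)

lemma fejer_series_ge_term: "a k * fejer (b k) (\<xi> - \<nu> k) \<le> fejer_series a b \<nu> \<xi>"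
  unfolding fejer_series_def
  using sum_le_suminf[OF summable_spectrum, of "{k}" \<xi> \<nu>] by (simp add: a_nonneg b_pos fejer_nonneg)

lemma fejer_series_split:
  "fejer_series a b \<nu> \<xi> = fejer_series (\<lambda>k. a (k + m)) (\<lambda>k. b (k + m)) (\<lambda>k. \<nu> (k + m)) \<xi>
     + (\<Sum>k<m. a k * fejer (b k) (\<xi> - \<nu> k))"
  unfolding fejer_series_def by (rule suminf_split_initial_segment[OF summable_spectrum])

lemma norm_tri_series_unmodulated:
  assumes "t \<noteq> 0" shows "norm (tri_series a b (\<lambda>_. 0) t) = (\<Sum>k. a k * tri (b k) t)"
proof -
  have "tri_series a b (\<lambda>_. 0) t = complex_of_real (\<Sum>k. a k * tri (b k) t)"
    unfolding tri_series_def cis_zero mult_zero_right mult_1_right mult_zero_left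
    by (rule suminf_of_real[OF summable_pointwise[OF assms], symmetric])
  moreover have "0 \<le> (\<Sum>k. a k * tri (b k) t)"
    by (rule suminf_nonneg[OF summable_pointwise[OF assms]]) (simp add: a_nonneg tri_nonneg)
  ultimately show ?thesis by simp
qed

lemma norm_tri_series_le:
  assumes "t \<noteq> 0" shows "norm (tri_series a b \<nu> t) \<le> (\<Sum>k. a k * tri (b k) t)"
proof -
  have "norm (complex_of_real (a k * tri (b k) t) * cis (2*pi*\<nu> k*t)) = a k * tri (b k) t" for k
    by (simp add: norm_mult a_nonneg tri_nonneg)
  then show ?thesis
    unfolding tri_series_def using summable_norm[of "\<lambda>k. complex_of_real (a k * tri (b k) t) * cis (2*pi*\<nu> k*t)"]
      summable_pointwise[OF assms] by simp
qed

lemma tri_series_vanishes: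
  assumes "1 \<le> \<bar>t\<bar>" shows "tri_series a b \<nu> t = 0"
proof -
  have "tri (b k) t = 0" for k
    using b_pos[of k] b_le_1[of k] assms by (intro tri_zero) auto
  then show ?thesis by (simp add: tri_series_def)
qed

lemma square_integrable_tri_series: "square_integrable (tri_series a b \<nu>)"
  unfolding square_integrable_def
proof (intro conjI)
  show "tri_series a b \<nu> \<in> borel_measurable lborel" by simp
  have "AE t in lborel. ennreal (norm (tri_series a b \<nu> t))^2 \<le> (\<Sum>k. ennreal (a k * tri (b k) t))^2"
    using AE_lborel_singleton[of 0]
  proof eventually_elim
    case (elim t)
    have "ennreal (norm (tri_series a b \<nu> t)) \<le> ennreal (\<Sum>k. a k * tri (b k) t)"
      using norm_tri_series_le[OF elim] by (rule ennreal_leI)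
    also have "\<dots> = (\<Sum>k. ennreal (a k * tri (b k) t))"
      using summable_pointwise[OF elim] a_nonneg tri_nonneg
      by (intro suminf_ennreal2[symmetric]) auto
    finally show ?case by (rule power_mono) simp
  qed
  then have "(\<integral>\<^sup>+t. ennreal (norm (tri_series a b \<nu> t))^2 \<partial>lborel)
      \<le> (\<integral>\<^sup>+t. (\<Sum>k. ennreal (a k * tri (b k) t))^2 \<partial>lborel)"
    by (rule nn_integral_mono_AE)
  also have "\<dots> \<le> ennreal (2 * (\<Sum>k. a k * sqrt (b k))^2)"
  proof (rule nn_integral_square_suminf_le[OF _ _ weights_nonneg summable_weights])
    fix i j
    have "(\<integral>\<^sup>+t. ennreal (a i * tri (b i) t) * ennreal (a j * tri (b j) t) \<partial>lborel)
        = (\<integral>\<^sup>+t. ennreal (a i * a j) * (ennreal (tri (b i) t) * ennreal (tri (b j) t)) \<partial>lborel)"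
      by (intro nn_integral_cong)
         (simp add: a_nonneg tri_nonneg ennreal_mult[symmetric] mult.assoc mult.left_commute)
    also have "\<dots> = ennreal (a i * a j) * (\<integral>\<^sup>+t. ennreal (tri (b i) t) * ennreal (tri (b j) t) \<partial>lborel)"
      by (rule nn_integral_cmult) measurable
    also have "\<dots> \<le> ennreal (a i * a j) * ennreal (2 * (sqrt (b i) * sqrt (b j)))"
      by (intro mult_left_mono tri_product_integral b_pos) simp
    also have "\<dots> = ennreal (2 * (a i * sqrt (b i) * (a j * sqrt (b j))))"
      by (subst ennreal_mult[symmetric]) (auto simp: a_nonneg less_imp_le[OF b_pos] mult_ac)
    finally show "(\<integral>\<^sup>+t. ennreal (a i * tri (b i) t) * ennreal (a j * tri (b j) t) \<partial>lborel)
        \<le> ennreal (2 * (a i * sqrt (b i) * (a j * sqrt (b j))))" .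
  qed measurable
  finally show "(\<integral>\<^sup>+t. ennreal (norm (tri_series a b \<nu> t))^2 \<partial>lborel) < \<infinity>"
    using ennreal_less_top[of "2 * (\<Sum>k. a k * sqrt (b k))^2"] by (simp add: le_less_trans)
qed

lemma spectrum_square_integral_le:
  "(\<integral>\<^sup>+\<xi>. (\<Sum>k. ennreal (a k * fejer (b k) (\<xi> - \<nu> k)))^2 \<partial>lborel)
     \<le> ennreal (4 * (\<Sum>k. a k * sqrt (b k))^2)"
proof (rule nn_integral_square_suminf_le[OF _ _ weights_nonneg summable_weights])
  fix i j
  have "(\<integral>\<^sup>+\<xi>. ennreal (a i * fejer (b i) (\<xi> - \<nu> i)) * ennreal (a j * fejer (b j) (\<xi> - \<nu> j)) \<partial>lborel)
      = (\<integral>\<^sup>+\<xi>. ennreal (a i * a j) * (ennreal (fejer (b i) (\<xi> - \<nu> i)) * ennreal (fejer (b j) (\<xi> - \<nu> j))) \<partial>lborel)"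
    by (intro nn_integral_cong)
       (simp add: a_nonneg b_pos fejer_nonneg ennreal_mult[symmetric] mult.assoc mult.left_commute)
  also have "\<dots> = ennreal (a i * a j)
      * (\<integral>\<^sup>+\<xi>. ennreal (fejer (b i) (\<xi> - \<nu> i)) * ennreal (fejer (b j) (\<xi> - \<nu> j)) \<partial>lborel)"
    by (rule nn_integral_cmult) measurable
  also have "\<dots> \<le> ennreal (a i * a j) * ennreal (4 * (sqrt (b i) * sqrt (b j)))"
    by (intro mult_left_mono fejer_product_integral b_pos) simp
  also have "\<dots> = ennreal (4 * (a i * sqrt (b i) * (a j * sqrt (b j))))"
    by (subst ennreal_mult[symmetric]) (auto simp: a_nonneg less_imp_le[OF b_pos] mult_ac)
  finally show "(\<integral>\<^sup>+\<xi>. ennreal (a i * fejer (b i) (\<xi> - \<nu> i)) * ennreal (a j * fejer (b j) (\<xi> - \<nu> j)) \<partial>lborel)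
      \<le> ennreal (4 * (a i * sqrt (b i) * (a j * sqrt (b j))))" .
qed auto

lemma norm_fejer_series:
  "ennreal (norm (complex_of_real (fejer_series a b \<nu> \<xi>))) = (\<Sum>k. ennreal (a k * fejer (b k) (\<xi> - \<nu> k)))"
  using fejer_series_nonneg[of \<nu> \<xi>] summable_spectrum[of \<xi> \<nu>]
  by (simp add: fejer_series_def suminf_ennreal2 a_nonneg b_pos fejer_nonneg)

lemma square_integrable_fejer_series:
  "square_integrable (\<lambda>\<xi>. complex_of_real (fejer_series a b \<nu> \<xi>))"
  unfolding square_integrable_def norm_fejer_series
  using spectrum_square_integral_le[of \<nu>]
  by (auto simp: le_less_trans[OF _ ennreal_less_top])

text \<open>Off the origin the series converges absolutely, so multiplying by the window and
  the Fourier kernel may be done termwise.\<close>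
lemma windowed_tri_series_expand:
  assumes "t \<noteq> 0"
  shows "indicator {-N..N} t *\<^sub>R (tri_series a b \<nu> t * cis (- 2 * pi * \<xi> * t))
    = (\<Sum>k. complex_of_real (a k)
         * (indicator {-N..N} t *\<^sub>R (complex_of_real (tri (b k) t) * cis (- (2*pi*(\<xi> - \<nu> k)) * t))))"
proof -
  let ?C = "complex_of_real (indicator {-N..N} t) * cis (- 2 * pi * \<xi> * t)"
  let ?u = "\<lambda>k. complex_of_real (a k * tri (b k) t) * cis (2*pi*\<nu> k*t)"
  have "summable (\<lambda>k. norm (?u k))"
    using summable_pointwise[OF assms] by (simp add: norm_mult a_nonneg tri_nonneg)
  then have u: "summable ?u" by (rule summable_norm_cancel)
  have "complex_of_real (a k)
      * (indicator {-N..N} t *\<^sub>R (complex_of_real (tri (b k) t) * cis (- (2*pi*(\<xi> - \<nu> k)) * t)))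
      = ?u k * ?C" (is "?term k = _") for k
  proof -
    have "cis (- (2*pi*(\<xi> - \<nu> k)) * t) = cis (2*pi*\<nu> k*t) * cis (- 2 * pi * \<xi> * t)"
      by (simp add: cis_mult algebra_simps)
    then show ?thesis by (simp add: scaleR_conv_of_real mult_ac)
  qed
  then have "(\<Sum>k. ?term k) = tri_series a b \<nu> t * ?C"
    unfolding tri_series_def by (simp only: suminf_mult2[OF u, symmetric])
  then show ?thesis by (simp add: scaleR_conv_of_real)
qed

text \<open>Termwise integration (dominated by the summable L^1 norms a k * b k) shows that
  every truncated Fourier integral with N \<ge> 1 already equals the Fejer series.\<close>
lemma fourier_trunc_tri_series:
  assumes N: "1 \<le> N"
  shows "fourier_trunc (tri_series a b \<nu>) N \<xi> = complex_of_real (fejer_series a b \<nu> \<xi>)"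
proof -
  define X where
    "X k t = indicator {-N..N} t *\<^sub>R (complex_of_real (tri (b k) t) * cis (- (2*pi*(\<xi> - \<nu> k)) * t))" for k t
  define f where "f k t = complex_of_real (a k) * X k t" for k t
  have bN: "b k \<le> N" for k using b_le_1[of k] N by linarith
  have term_integrable: "integrable lborel (f k)" for k
    using tri_cis_set_integrable[of "-N" N "b k" "- (2*pi*(\<xi> - \<nu> k))"]
    unfolding f_def X_def set_integrable_def by (intro integrable_mult_right) simp
  have term_integral: "integral\<^sup>L lborel (f k) = complex_of_real (a k * fejer (b k) (\<xi> - \<nu> k))" for k
  proof -
    have "integral\<^sup>L lborel (X k) = complex_of_real (fejer (b k) (\<xi> - \<nu> k))"
      unfolding X_def by (rule tri_fourier_trunc[OF b_pos bN])
    then show ?thesis unfolding f_def by simp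
  qed
  have term_norm: "norm (f k t) \<le> a k * tri (b k) t" for k t
    by (simp add: f_def X_def norm_mult a_nonneg tri_nonneg indicator_def)
  have term_L1: "(\<integral>t. norm (f k t) \<partial>lborel) = a k * b k" for k
  proof -
    have "(\<integral>t. norm (X k t) \<partial>lborel) = b k"
      unfolding X_def by (rule tri_L1_norm[OF b_pos bN])
    then show ?thesis unfolding f_def norm_mult by (simp add: a_nonneg)
  qed
  have expand: "indicator {-N..N} t *\<^sub>R (tri_series a b \<nu> t * cis (- 2 * pi * \<xi> * t)) = (\<Sum>k. f k t)"
    if "t \<noteq> 0" for t
    unfolding f_def X_def by (rule windowed_tri_series_expand[OF that])
  have "fourier_trunc (tri_series a b \<nu>) N \<xi> = (\<integral>t. (\<Sum>k. f k t) \<partial>lborel)"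
    unfolding fourier_trunc_def set_lebesgue_integral_def
  proof (rule integral_cong_AE)
    show "AE t in lborel. indicator {-N..N} t *\<^sub>R (tri_series a b \<nu> t * cis (- 2 * pi * \<xi> * t)) = (\<Sum>k. f k t)"
      using AE_lborel_singleton[of 0] by eventually_elim (use expand in auto)
  qed (auto simp: f_def X_def)
  also have "\<dots> = (\<Sum>k. integral\<^sup>L lborel (f k))"
  proof (rule integral_suminf[OF term_integrable])
    show "AE t in lborel. summable (\<lambda>k. norm (f k t))"
      using AE_lborel_singleton[of 0]
    proof eventually_elim
      case (elim t)
      show ?case
        by (rule summable_comparison_test[OF _ summable_pointwise[OF elim]]) (use term_norm in auto)
    qed
    show "summable (\<lambda>k. \<integral>t. norm (f k t) \<partial>lborel)"
      unfolding term_L1 by (rule summable_L1)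
  qed
  also have "\<dots> = complex_of_real (fejer_series a b \<nu> \<xi>)"
    unfolding term_integral fejer_series_def by (rule suminf_of_real[OF summable_spectrum, symmetric])
  finally show ?thesis .
qed

lemma is_L2_fourier_tri_series:
  "is_L2_fourier (tri_series a b \<nu>) (\<lambda>\<xi>. complex_of_real (fejer_series a b \<nu> \<xi>))"
  unfolding is_L2_fourier_def
proof
  show "square_integrable (\<lambda>\<xi>. complex_of_real (fejer_series a b \<nu> \<xi>))"
    by (rule square_integrable_fejer_series)
  have "\<forall>\<^sub>F N in at_top. (\<integral>\<^sup>+\<xi>. ennreal (norm (complex_of_real (fejer_series a b \<nu> \<xi>)
          - fourier_trunc (tri_series a b \<nu>) N \<xi>)) ^ 2 \<partial>lborel) = 0"
    unfolding eventually_at_top_linorder by (rule exI[of _ 1]) (simp add: fourier_trunc_tri_series)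
  then show "((\<lambda>N. \<integral>\<^sup>+\<xi>. ennreal (norm (complex_of_real (fejer_series a b \<nu> \<xi>)
          - fourier_trunc (tri_series a b \<nu>) N \<xi>)) ^ 2 \<partial>lborel) \<longlongrightarrow> 0) at_top"
    by (rule tendsto_eventually)
qed

end

section \<open>Essential suprema on unit intervals and sums over the integers\<close>

lemma Linf_norm_on_le:
  assumes "AE t in lborel. t \<in> {a..b} \<longrightarrow> norm (f t) \<le> M"
  shows "Linf_norm_on f a b \<le> ennreal M"
  unfolding Linf_norm_on_def
  by (rule Inf_lower) (use assms in \<open>auto elim!: eventually_mono intro: ennreal_leI\<close>)

lemma fejer_1_le: "fejer 1 x \<le> 1 / max 1 (x^2)"
proof (cases "x^2 \<le> 1")
  case True then show ?thesis using fejer_le[of 1 x] by simp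
next
  case False
  then have "x \<noteq> 0" by auto
  then show ?thesis using False fejer_le_decay[of 1 x] by simp
qed

text \<open>On a unit interval [j, j+1] the kernel of width 1 is at most 8/(j^2+1);
  these bounds are summable over j.\<close>
lemma fejer_1_le_on_unit_interval:
  fixes j :: real assumes "j \<le> x" "x \<le> j + 1"
  shows "fejer 1 x \<le> 8 / (j^2 + 1)"
proof -
  have "j^2 \<le> 2 * x^2 + 2 * (j - x)^2"
    using zero_le_square[of "j - 2*x"] by (simp add: power2_eq_square algebra_simps)
  moreover have "(x - j)^2 \<le> 1^2" by (rule power_mono) (use assms in auto)
  then have "(j - x)^2 \<le> 1" by (simp add: power2_commute)
  ultimately have "j^2 + 1 \<le> 8 * max 1 (x^2)" by linarith
  then have "1 / max 1 (x^2) \<le> 8 / (j^2 + 1)"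
    by (simp add: field_simps add_pos_nonneg)
  then show ?thesis using fejer_1_le[of x] by linarith
qed

lemma int_decode_bound: "real n \<le> 2 * \<bar>real_of_int (int_decode n)\<bar> + 1"
proof (cases "even n")
  case True
  then have "int_decode n = int (n div 2)" by (simp add: int_decode_def sum_decode_def)
  then show ?thesis using True by (auto elim!: evenE)
next
  case False
  then have "int_decode n = - int (n div 2) - 1" by (simp add: int_decode_def sum_decode_def)
  then show ?thesis using False by (auto elim!: oddE)
qed

text \<open>The sum over all integers m of 1/(m^2+1) is finite; enumerate the integers by
  int_decode and compare with 8/(n^2+1).\<close>
lemma inverse_square_sum_over_int:
  "(\<integral>\<^sup>+m. ennreal (1 / ((real_of_int m)^2 + 1)) \<partial>count_space (UNIV :: int set)) < \<infinity>"
proof -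
  let ?w = "\<lambda>n::nat. 8 / ((real n)^2 + 1)"
  have summable_w: "summable ?w"
  proof (rule summable_comparison_test'[where N=1])
    show "summable (\<lambda>n. 8 * inverse (real n ^ 2))"
      by (rule summable_mult, rule inverse_power_summable) simp
    fix n :: nat assume "1 \<le> n"
    then show "norm (?w n) \<le> 8 * inverse (real n ^ 2)"
      by (simp add: divide_simps add_pos_nonneg)
  qed
  have compare: "1 / ((real_of_int (int_decode n))^2 + 1) \<le> ?w n" for n
  proof -
    let ?d = "\<bar>real_of_int (int_decode n)\<bar>"
    have h1: "(real n)^2 \<le> (2 * ?d + 1)^2"
      using int_decode_bound[of n] by (intro power_mono) simp_all
    have h2: "(2 * ?d + 1)^2 + 1 \<le> 8 * ((real_of_int (int_decode n))^2 + 1)"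
      using zero_le_square[of "2 * ?d - 1"] by (simp add: power2_eq_square algebra_simps)
    from h1 h2 have "(real n)^2 + 1 \<le> 8 * ((real_of_int (int_decode n))^2 + 1)" by linarith
    then show ?thesis by (simp add: field_simps add_pos_nonneg)
  qed
  have "(\<integral>\<^sup>+m. ennreal (1 / ((real_of_int m)^2 + 1)) \<partial>count_space (UNIV :: int set))
      = (\<Sum>n. ennreal (1 / ((real_of_int (int_decode n))^2 + 1)))"
    by (subst nn_integral_bij_count_space[OF bij_int_decode, symmetric])
       (rule nn_integral_count_space_nat)
  also have "\<dots> \<le> (\<Sum>n. ennreal (?w n))"
    by (intro suminf_le summableI ennreal_leI compare)
  also have "\<dots> = ennreal (\<Sum>n. ?w n)" by (rule suminf_ennreal2[OF _ summable_w]) simp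
  finally show ?thesis by (simp add: le_less_trans)
qed

section \<open>A function satisfying (*) but not (**)\<close>

text \<open>The triangle of width 1 modulated by the lacunary series
  sum_k 2^-k e^(2 pi i 4^k t).  It is bounded with compact support, and its transform
  sum_k 2^-k fejer 1 (xi - 4^k) decays fast between the bumps at 4^k, so (**) fails;
  but the bump at the first 4^k \<ge> L carries mass about 1/L, which gives (*).\<close>

definition lac_amp :: "nat \<Rightarrow> real" where "lac_amp k = (1/2)^k"
definition lac_freq :: "nat \<Rightarrow> real" where "lac_freq k = 4^k"

definition lac_wave :: "real \<Rightarrow> complex" where
  "lac_wave = tri_series lac_amp (\<lambda>_. 1) lac_freq"
definition lac_spectrum :: "real \<Rightarrow> complex" where
  "lac_spectrum \<xi> = complex_of_real (fejer_series lac_amp (\<lambda>_. 1) lac_freq \<xi>)"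

lemma lac_amp_pos: "0 < lac_amp k" by (simp add: lac_amp_def)
lemma summable_lac_amp: "summable lac_amp"
  unfolding lac_amp_def by (rule summable_geometric) simp
lemma suminf_lac_amp: "(\<Sum>k. lac_amp k) = 2"
  unfolding lac_amp_def using suminf_geometric[of "1/2::real"] by simp

interpretation lacunary: triangle_series lac_amp "\<lambda>_. 1"
  by unfold_locales (simp_all add: less_imp_le[OF lac_amp_pos] summable_lac_amp)

lemma lac_L2: "square_integrable lac_wave" "is_L2_fourier lac_wave lac_spectrum"
  unfolding lac_wave_def lac_spectrum_def
  by (rule lacunary.square_integrable_tri_series, rule lacunary.is_L2_fourier_tri_series)

lemma power_4_bracket:
  fixes L :: real assumes "1 \<le> L" obtains k :: nat where "L \<le> 4^k" "4^k < 4 * L"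
proof -
  obtain n :: nat where "L < 4^n" using real_arch_pow[of 4 L] by auto
  then have ex: "\<exists>k::nat. L \<le> 4^k" by (auto intro: less_imp_le)
  define k where "k = (LEAST k::nat. L \<le> 4^k)"
  have "L \<le> 4^k" unfolding k_def by (rule LeastI_ex[OF ex])
  moreover have "(4::real)^k < 4 * L"
  proof (cases k)
    case 0 then show ?thesis using assms by simp
  next
    case (Suc j)
    then have "\<not> L \<le> 4^j" unfolding k_def by (metis lessI not_less_Least)
    then show ?thesis using Suc by simp
  qed
  ultimately show ?thesis by (rule that)
qed

lemma lac_spectrum_lower:
  assumes "4^k + 1/4 \<le> \<xi>" "\<xi> \<le> 4^k + 1/2"
  shows "1 / (64 * 4^k) \<le> norm (lac_spectrum \<xi>) ^ 2"
proof -
  have "lac_amp k * (1/8) \<le> lac_amp k * fejer 1 (\<xi> - lac_freq k)"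
    using assms fejer_lower[of "\<xi> - lac_freq k"]
    by (intro mult_left_mono) (auto simp: lac_freq_def less_imp_le[OF lac_amp_pos])
  also have "\<dots> \<le> norm (lac_spectrum \<xi>)"
    using lacunary.fejer_series_ge_term[of k \<xi> lac_freq] lacunary.fejer_series_nonneg[of lac_freq \<xi>]
    by (simp add: lac_spectrum_def)
  finally have "lac_amp k / 8 \<le> norm (lac_spectrum \<xi>)" by simp
  then have "(lac_amp k / 8)^2 \<le> norm (lac_spectrum \<xi>) ^ 2"
    by (rule power_mono) (simp add: less_imp_le[OF lac_amp_pos])
  moreover have "(lac_amp k / 8)^2 = 1 / (64 * 4^k)"
  proof -
    have "(2::real)^k * 2^k = 4^k" by (simp add: power_mult_distrib[symmetric])
    then show ?thesis by (simp add: lac_amp_def power_divide power2_eq_square)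
  qed
  ultimately show ?thesis by simp
qed

lemma lac_cond_star: "cond_star lac_wave lac_spectrum"
  unfolding cond_star_def
proof (intro exI[of _ "1/1024"] conjI allI impI)
  fix R L :: real assume R: "1 \<le> R" and L: "1 \<le> L"
  obtain k :: nat where k: "L \<le> 4^k" "4^k < 4 * L" using power_4_bracket[OF L] by blast
  define W where "W = {4^k + 1/4 .. 4^k + 1/2 :: real}"
  have bump: "ennreal (1 / (256 * L)) * indicator W \<xi>
      \<le> indicator {\<xi>. \<bar>\<xi>\<bar> \<ge> L} \<xi> * ennreal (norm (lac_spectrum \<xi>)) ^ 2" for \<xi>
  proof (cases "\<xi> \<in> W")
    case True
    then have "L \<le> \<bar>\<xi>\<bar>" using k by (auto simp: W_def)
    have "1 / (256 * L) \<le> 1 / (64 * 4^k)" using k L by (simp add: field_simps)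
    also have "\<dots> \<le> norm (lac_spectrum \<xi>) ^ 2"
      using True by (intro lac_spectrum_lower) (auto simp: W_def)
    finally show ?thesis using True \<open>L \<le> \<bar>\<xi>\<bar>\<close> by (simp add: ennreal_leI ennreal_power)
  qed simp
  have "ennreal (1/1024 / (R * L)) \<le> ennreal (1 / (256 * L) * (1/4))"
    using R L by (intro ennreal_leI) (simp add: field_simps)
  also have "\<dots> = ennreal (1 / (256 * L)) * emeasure lborel W"
    using L by (subst ennreal_mult) (auto simp: W_def)
  also have "\<dots> = (\<integral>\<^sup>+\<xi>. ennreal (1 / (256 * L)) * indicator W \<xi> \<partial>lborel)"
    by (simp add: nn_integral_cmult_indicator W_def)
  also have "\<dots> \<le> (\<integral>\<^sup>+\<xi>. indicator {\<xi>. \<bar>\<xi>\<bar> \<ge> L} \<xi> * ennreal (norm (lac_spectrum \<xi>)) ^ 2 \<partial>lborel)"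
    by (rule nn_integral_mono) (rule bump)
  finally show "(\<integral>\<^sup>+t. indicator {t. \<bar>t\<bar> \<ge> R} t * ennreal (norm (lac_wave t)) ^ 2 \<partial>lborel)
     + (\<integral>\<^sup>+\<xi>. indicator {\<xi>. \<bar>\<xi>\<bar> \<ge> L} \<xi> * ennreal (norm (lac_spectrum \<xi>)) ^ 2 \<partial>lborel)
     \<ge> ennreal (1/1024 / (R * L))"
    by (simp add: add_increasing)
qed simp

text \<open>The wave is bounded by sum_k 2^-k = 2 and vanishes outside [-1,1], so only the
  two unit intervals [-1,0] and [0,1] contribute to its sum of local suprema.\<close>
lemma lac_wave_local_sup_summable:
  "(\<integral>\<^sup>+n. Linf_norm_on lac_wave (real_of_int n) (real_of_int n + 1) \<partial>count_space (UNIV :: int set)) < \<infinity>"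
proof -
  have bounded: "norm (lac_wave t) \<le> 2" if "t \<noteq> 0" for t
  proof -
    have "norm (lac_wave t) \<le> (\<Sum>k. lac_amp k * tri 1 t)"
      unfolding lac_wave_def by (rule lacunary.norm_tri_series_le[OF that])
    also have "\<dots> \<le> (\<Sum>k. lac_amp k)"
      proof (rule suminf_le[OF _ lacunary.summable_pointwise[OF that] summable_lac_amp])
      fix k show "lac_amp k * tri 1 t \<le> lac_amp k"
        using mult_left_le[OF tri_le_1[of 1 t]] lac_amp_pos[of k] by simp
    qed
    finally show ?thesis by (simp add: suminf_lac_amp)
  qed
  have local_sup: "Linf_norm_on lac_wave (real_of_int n) (real_of_int n + 1) \<le> 2 * indicator {-1, 0} n"
    for n :: int
  proof (cases "n \<in> {-1, 0}")
    case True
    have "Linf_norm_on lac_wave (real_of_int n) (real_of_int n + 1) \<le> ennreal 2"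
      using AE_lborel_singleton[of 0] by (intro Linf_norm_on_le) (auto elim!: eventually_mono bounded)
    then show ?thesis using True by simp
  next
    case False
    have "1 \<le> \<bar>t\<bar>" if "t \<in> {real_of_int n..real_of_int n + 1}" for t
      using False that by (cases "n \<ge> 1") auto
    then have "Linf_norm_on lac_wave (real_of_int n) (real_of_int n + 1) \<le> ennreal 0"
      unfolding lac_wave_def by (intro Linf_norm_on_le AE_I2) (simp add: lacunary.tri_series_vanishes)
    then show ?thesis by simp
  qed
  have "(\<integral>\<^sup>+n. Linf_norm_on lac_wave (real_of_int n) (real_of_int n + 1) \<partial>count_space UNIV)
     \<le> (\<integral>\<^sup>+n. 2 * indicator {-1, 0::int} n \<partial>count_space UNIV)"
    by (intro nn_integral_mono local_sup)
  also have "\<dots> = 4"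
    by (subst nn_integral_cmult_indicator) auto
  finally show ?thesis by (simp add: le_less_trans)
qed

lemma lac_spectrum_local_sup:
  "Linf_norm_on lac_spectrum (real_of_int n) (real_of_int n + 1)
     \<le> (\<Sum>k. ennreal (lac_amp k * (8 / ((real_of_int (n - 4^k))^2 + 1))))"
proof -
  have summable: "summable (\<lambda>k. lac_amp k * (8 / ((real_of_int (n - 4^k))^2 + 1)))"
  proof (rule summable_comparison_test[OF _ summable_mult2[OF summable_lac_amp, of 8]], intro exI allI impI)
    fix k
    have "8 / ((real_of_int (n - 4^k))^2 + 1) \<le> 8 / 1"
      by (rule divide_left_mono) (auto simp: add_nonneg_pos)
    then have "lac_amp k * (8 / ((real_of_int (n - 4^k))^2 + 1)) \<le> lac_amp k * 8"
      using mult_left_mono less_imp_le[OF lac_amp_pos[of k]] by fastforce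
    moreover have "0 \<le> lac_amp k * (8 / ((real_of_int (n - 4^k))^2 + 1))"
      using lac_amp_pos[of k] by (simp add: add_nonneg_pos)
    ultimately show "norm (lac_amp k * (8 / ((real_of_int (n - 4^k))^2 + 1))) \<le> lac_amp k * 8"
      by simp
  qed
  have "norm (lac_spectrum \<xi>) \<le> (\<Sum>k. lac_amp k * (8 / ((real_of_int (n - 4^k))^2 + 1)))"
    if "real_of_int n \<le> \<xi>" "\<xi> \<le> real_of_int n + 1" for \<xi>
  proof -
    have "fejer 1 (\<xi> - lac_freq k) \<le> 8 / ((real_of_int (n - 4^k))^2 + 1)" for k
      using that by (intro fejer_1_le_on_unit_interval) (auto simp: lac_freq_def)
    then have "fejer_series lac_amp (\<lambda>_. 1) lac_freq \<xi>
        \<le> (\<Sum>k. lac_amp k * (8 / ((real_of_int (n - 4^k))^2 + 1)))"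
      unfolding fejer_series_def using lacunary.summable_spectrum summable
      by (intro suminf_le mult_left_mono) (auto simp: less_imp_le[OF lac_amp_pos])
    then show ?thesis
      using lacunary.fejer_series_nonneg[of lac_freq \<xi>] by (simp add: lac_spectrum_def)
  qed
  then have "Linf_norm_on lac_spectrum (real_of_int n) (real_of_int n + 1)
      \<le> ennreal (\<Sum>k. lac_amp k * (8 / ((real_of_int (n - 4^k))^2 + 1)))"
    by (intro Linf_norm_on_le AE_I2) auto
  also have "\<dots> = (\<Sum>k. ennreal (lac_amp k * (8 / ((real_of_int (n - 4^k))^2 + 1))))"
    using summable
    by (intro suminf_ennreal2[symmetric]) (auto simp: less_imp_le[OF lac_amp_pos] add_pos_nonneg)
  finally show ?thesis .
qed

text \<open>Summing over n: after translating by 4^k each bump contributes 2^-k times the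
  finite sum over the integers of 8/(m^2+1).\<close>
lemma lac_spectrum_local_sup_summable:
  "(\<integral>\<^sup>+n. Linf_norm_on lac_spectrum (real_of_int n) (real_of_int n + 1) \<partial>count_space (UNIV :: int set)) < \<infinity>"
proof -
  define Q where "Q = (\<integral>\<^sup>+m. ennreal (1 / ((real_of_int m)^2 + 1)) \<partial>count_space (UNIV :: int set))"
  have bump: "(\<integral>\<^sup>+n. ennreal (lac_amp k * (8 / ((real_of_int (n - 4^k))^2 + 1))) \<partial>count_space UNIV)
      = ennreal (8 * lac_amp k) * Q" for k
  proof -
    have "(\<integral>\<^sup>+n. ennreal (lac_amp k * (8 / ((real_of_int (n - 4^k))^2 + 1))) \<partial>count_space UNIV)
        = (\<integral>\<^sup>+m. ennreal (lac_amp k * (8 / ((real_of_int m)^2 + 1))) \<partial>count_space UNIV)"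
      by (rule nn_integral_bij_count_space, rule bij_betwI[of _ _ _ "\<lambda>m. m + 4^k"]) auto
    also have "\<dots> = (\<integral>\<^sup>+m. ennreal (8 * lac_amp k) * ennreal (1 / ((real_of_int m)^2 + 1)) \<partial>count_space UNIV)"
      by (intro nn_integral_cong, subst ennreal_mult[symmetric])
         (auto simp: less_imp_le[OF lac_amp_pos] add_pos_nonneg)
    finally show ?thesis unfolding Q_def by (simp add: nn_integral_cmult)
  qed
  have "(\<integral>\<^sup>+n. Linf_norm_on lac_spectrum (real_of_int n) (real_of_int n + 1) \<partial>count_space UNIV)
      \<le> (\<integral>\<^sup>+n. (\<Sum>k. ennreal (lac_amp k * (8 / ((real_of_int (n - 4^k))^2 + 1)))) \<partial>count_space UNIV)"
    by (intro nn_integral_mono lac_spectrum_local_sup)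
  also have "\<dots> = (\<Sum>k. \<integral>\<^sup>+n. ennreal (lac_amp k * (8 / ((real_of_int (n - 4^k))^2 + 1))) \<partial>count_space UNIV)"
    by (rule nn_integral_suminf) simp
  also have "\<dots> = (\<Sum>k. ennreal (8 * lac_amp k) * Q)"
    by (simp only: bump)
  also have "\<dots> = ennreal (\<Sum>k. 8 * lac_amp k) * Q"
    by (subst suminf_ennreal2[symmetric])
       (auto simp: less_imp_le[OF lac_amp_pos] summable_lac_amp)
  also have "\<dots> < \<infinity>"
    using inverse_square_sum_over_int by (simp add: Q_def ennreal_mult_less_top)
  finally show ?thesis .
qed

lemma lac_not_cond_star_star: "\<not> cond_star_star lac_wave lac_spectrum"
  unfolding cond_star_star_def
  using lac_wave_local_sup_summable lac_spectrum_local_sup_summable by (auto dest: less_imp_neq)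

section \<open>A function satisfying (**) but not (*)\<close>

text \<open>The sum of the triangles of widths w_k = 4^(-4^k).  It is unbounded near 0, so
  (**) holds; it vanishes for |t| \<ge> 1, and since the widths shrink super-exponentially
  the spectral tail beyond L = w_K^-2 is O(w_K^4) = o(1/L), so (*) fails.\<close>

definition spike_width :: "nat \<Rightarrow> real" where "spike_width k = (1/4)^(4^k)"

definition spikes :: "real \<Rightarrow> complex" where
  "spikes = tri_series (\<lambda>_. 1) spike_width (\<lambda>_. 0)"
definition spikes_spectrum :: "real \<Rightarrow> complex" where
  "spikes_spectrum \<xi> = complex_of_real (fejer_series (\<lambda>_. 1) spike_width (\<lambda>_. 0) \<xi>)"

lemma spike_width_pos: "0 < spike_width k"
  by (simp add: spike_width_def)

lemma spike_width_le_1: "spike_width k \<le> 1"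
  by (simp add: spike_width_def power_le_one)

lemma spike_width_antimono: "k \<le> K \<Longrightarrow> spike_width K \<le> spike_width k"
  unfolding spike_width_def by (rule power_decreasing) auto

lemma spike_width_le_geometric: "spike_width k \<le> (1/4)^k"
proof -
  have "k < 2^k" by (rule less_exp)
  also have "(2::nat)^k \<le> 4^k" by (rule power_mono) auto
  finally show ?thesis unfolding spike_width_def by (intro power_decreasing) auto
qed

lemma spike_width_Suc: "spike_width (Suc k) = spike_width k ^ 4"
  by (simp add: spike_width_def power_mult[symmetric] mult.commute)

lemma sqrt_spike_width: "sqrt (spike_width k) = (1/2)^(4^k)"
proof -
  have "spike_width k = ((1/2)^(4^k))^2"
    by (simp add: spike_width_def power2_eq_square power_mult_distrib[symmetric])
  then show ?thesis by simp
qed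

lemma power_4_add_ge: "(4::nat)^m + d \<le> 4^(m + d)"
proof -
  have "1 \<le> (4::nat)^m" by simp
  then have "d \<le> 4^m * d" using mult_le_mono1[of 1 "(4::nat)^m" d] by simp
  then have "(4::nat)^m + d \<le> 4^m * (d + 1)" by (simp add: algebra_simps)
  also have "\<dots> \<le> 4^m * 4^d"
    by (rule mult_left_mono) (induction d, auto)
  finally show ?thesis by (simp add: power_add)
qed

lemma sqrt_spike_width_shift_le: "sqrt (spike_width (m + i)) \<le> sqrt (spike_width m) * (1/2)^i"
proof -
  have "(1/2::real)^(4^(m + i)) \<le> (1/2)^(4^m + i)"
    by (rule power_decreasing) (auto simp: power_4_add_ge)
  then show ?thesis by (simp add: sqrt_spike_width power_add)
qed

lemma summable_sqrt_spike_width: "summable (\<lambda>k. sqrt (spike_width k))"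
proof (rule summable_comparison_test[OF _ summable_geometric[of "1/2::real"]], intro exI allI impI)
  fix n
  have "sqrt (spike_width n) \<le> (1/2) * (1/2)^n"
    using sqrt_spike_width_shift_le[of 0 n] by (simp add: sqrt_spike_width)
  moreover have nonneg: "0 \<le> sqrt (spike_width n)" using spike_width_pos[of n] by simp
  ultimately have "sqrt (spike_width n) \<le> (1/2)^n" by linarith
  then show "norm (sqrt (spike_width n)) \<le> (1/2)^n" using nonneg by simp
qed simp

lemma sqrt_spike_width_tail:
  "(\<Sum>i. sqrt (spike_width (i + m))) \<le> 2 * sqrt (spike_width m)"
proof -
  have "(\<Sum>i. sqrt (spike_width (i + m))) \<le> (\<Sum>i. sqrt (spike_width m) * (1/2)^i)"
    using sqrt_spike_width_shift_le[of m] summable_sqrt_spike_width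
    by (intro suminf_le)
       (auto simp: add.commute summable_iff_shift[of "\<lambda>k. sqrt (spike_width k)" m])
  also have "\<dots> = 2 * sqrt (spike_width m)"
    by (simp add: suminf_geometric summable_geometric suminf_mult)
  finally show ?thesis .
qed

text \<open>In particular the tail after index K is controlled by w_(K+1) = w_K^4.\<close>
lemma sqrt_spike_width_tail_square:
  "(\<Sum>i. sqrt (spike_width (i + Suc K)))^2 \<le> 4 * spike_width K ^ 4"
proof -
  have "0 \<le> (\<Sum>i. sqrt (spike_width (i + Suc K)))"
    using summable_iff_shift[of "\<lambda>k. sqrt (spike_width k)" "Suc K"] summable_sqrt_spike_width
    by (intro suminf_nonneg) (auto simp: less_imp_le[OF spike_width_pos])
  then have "(\<Sum>i. sqrt (spike_width (i + Suc K)))^2 \<le> (2 * sqrt (spike_width (Suc K)))^2"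
    by (intro power_mono sqrt_spike_width_tail)
  also have "\<dots> = 4 * spike_width K ^ 4"
    by (simp add: power_mult_distrib spike_width_Suc less_imp_le[OF spike_width_pos])
  finally show ?thesis .
qed

text \<open>The reciprocal widths grow so fast that their partial sums are dominated by the
  last term.\<close>
lemma inverse_spike_width_sum: "(\<Sum>k<Suc K. 1 / spike_width k) \<le> 2 / spike_width K"
proof (induction K)
  case 0 show ?case by (simp add: divide_right_mono less_imp_le[OF spike_width_pos])
next
  case (Suc K)
  have "4 \<le> 1 / spike_width K"
  proof -
    have "(4::real) \<le> 4^(4^K)" by (rule power_increasing[where n=1, simplified]) auto
    then show ?thesis by (simp add: spike_width_def power_divide)
  qed
  moreover have "2 * x \<le> x^4" if "4 \<le> x" for x :: real
  proof -
    have "(2::real) \<le> 4^3" by simp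
    also have "(4::real)^3 \<le> x^3" using that by (intro power_mono) auto
    finally have "x * 2 \<le> x * x^3" using that by (intro mult_left_mono) auto
    then show ?thesis by (simp add: power_numeral_reduce mult.commute)
  qed
  ultimately have "2 * (1 / spike_width K) \<le> (1 / spike_width K)^4" by blast
  then have "2 / spike_width K \<le> 1 / spike_width (Suc K)"
    by (simp add: spike_width_Suc power_one_over)
  then show ?case using Suc by simp
qed

interpretation spiky: triangle_series "\<lambda>_. 1" spike_width
  by unfold_locales (simp_all add: spike_width_pos spike_width_le_1 summable_sqrt_spike_width)

lemma spikes_L2: "square_integrable spikes" "is_L2_fourier spikes spikes_spectrum"
  unfolding spikes_def spikes_spectrum_def
  by (rule spiky.square_integrable_tri_series, rule spiky.is_L2_fourier_tri_series)

lemma spikes_large_near_0: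
  assumes t: "0 < t" "t \<le> spike_width K / 2"
  shows "real (Suc K) / 2 \<le> norm (spikes t)"
proof -
  have half: "1/2 \<le> tri (spike_width k) t" if "k \<le> K" for k
  proof -
    have "spike_width K \<le> spike_width k" using that by (rule spike_width_antimono)
    then have "t / spike_width k \<le> 1/2" using t spike_width_pos[of k] by (simp add: divide_le_eq)
    moreover have "tri (spike_width k) t = max 0 (1 - t / spike_width k)"
      using t by (simp add: tri_def)
    ultimately show ?thesis by linarith
  qed
  have "real (Suc K) / 2 = (\<Sum>k<Suc K. 1/2)" by simp
  also have "\<dots> \<le> (\<Sum>k<Suc K. tri (spike_width k) t)" by (rule sum_mono) (use half in auto)
  also have "\<dots> \<le> (\<Sum>k. tri (spike_width k) t)"
    using spiky.summable_pointwise[of t] t by (intro sum_le_suminf) (auto simp: tri_nonneg)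
  also have "\<dots> = norm (spikes t)"
    using spiky.norm_tri_series_unmodulated[of t] t by (simp add: spikes_def)
  finally show ?thesis .
qed

text \<open>Hence spikes exceeds any bound m on an interval (0, w_K/2] of positive measure.\<close>
lemma spikes_local_sup_at_0: "Linf_norm_on spikes 0 1 = top"
  unfolding Linf_norm_on_def Inf_top_conv
proof safe
  fix M assume AE: "AE t in lborel. t \<in> {0..1} \<longrightarrow> ennreal (norm (spikes t)) \<le> M"
  show "M = top"
  proof (rule ccontr)
    assume "M \<noteq> top"
    then obtain m where m: "M = ennreal m" "0 \<le> m" by (cases M) auto
    obtain K :: nat where K: "2 * m < real K" using reals_Archimedean2 by blast
    define A where "A = {0<..spike_width K / 2}"
    have "AE t in lborel. t \<notin> A"
      using AE
    proof eventually_elim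
      case (elim t)
      show ?case
      proof
        assume "t \<in> A"
        then have "t \<in> {0..1}" and "m < norm (spikes t)"
          using spike_width_le_1[of K] spikes_large_near_0[of t K] K by (auto simp: A_def)
        then show False using elim m by simp
      qed
    qed
    then have "emeasure lborel A = 0"
      by (subst (asm) AE_iff_measurable[of A]) (auto simp: A_def)
    moreover have "emeasure lborel A = ennreal (spike_width K / 2)"
      using spike_width_pos[of K] by (simp add: A_def)
    ultimately show False using spike_width_pos[of K] by simp
  qed
qed

lemma spikes_cond_star_star: "cond_star_star spikes spikes_spectrum"
proof -
  have "Linf_norm_on spikes (real_of_int 0) (real_of_int 0 + 1)
     \<le> (\<integral>\<^sup>+n. Linf_norm_on spikes (real_of_int n) (real_of_int n + 1) \<partial>count_space (UNIV :: int set))"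
    by (rule nn_integral_ge_point) simp
  then show ?thesis
    unfolding cond_star_star_def using spikes_local_sup_at_0 by (simp add: top_unique)
qed

lemma spikes_spectrum_head:
  assumes "\<xi> \<noteq> 0"
  shows "(\<Sum>k<Suc K. fejer (spike_width k) \<xi>) \<le> 2 / (\<xi>^2 * spike_width K)"
proof -
  have "(\<Sum>k<Suc K. fejer (spike_width k) \<xi>) \<le> (\<Sum>k<Suc K. (1/\<xi>^2) * (1 / spike_width k))"
    by (rule sum_mono) (use fejer_le_decay[OF spike_width_pos assms] in simp)
  also have "\<dots> = (1/\<xi>^2) * (\<Sum>k<Suc K. 1 / spike_width k)"
    by (rule sum_distrib_left[symmetric])
  also have "\<dots> \<le> (1/\<xi>^2) * (2 / spike_width K)"
    by (rule mult_left_mono[OF inverse_spike_width_sum]) simp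
  finally show ?thesis by simp
qed

lemma spikes_spectrum_square_le:
  assumes "\<xi> \<noteq> 0"
  shows "norm (spikes_spectrum \<xi>)^2 \<le> 8 / spike_width K^2 * (1/\<xi>^4)
           + 2 * fejer_series (\<lambda>_. 1) (\<lambda>k. spike_width (k + Suc K)) (\<lambda>_. 0) \<xi> ^ 2"
proof -
  define w where "w = spike_width K"
  define H where "H = fejer_series (\<lambda>_. 1) (\<lambda>k. spike_width (k + Suc K)) (\<lambda>_. 0) \<xi>"
  define A where "A = (\<Sum>k<Suc K. fejer (spike_width k) \<xi>)"
  have A: "0 \<le> A" "A \<le> 2 / (\<xi>^2 * w)"
    unfolding A_def w_def using spikes_spectrum_head[OF assms, of K]
    by (auto intro!: sum_nonneg fejer_nonneg spike_width_pos simp del: sum.lessThan_Suc)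
  have "norm (spikes_spectrum \<xi>) = fejer_series (\<lambda>_. 1) spike_width (\<lambda>_. 0) \<xi>"
    using spiky.fejer_series_nonneg[of "\<lambda>_. 0" \<xi>] by (simp add: spikes_spectrum_def)
  also have "\<dots> = H + A"
    using spiky.fejer_series_split[of "\<lambda>_. 0" \<xi> "Suc K"]
    by (simp add: H_def A_def del: sum.lessThan_Suc)
  finally have "norm (spikes_spectrum \<xi>)^2 \<le> 2 * H^2 + 2 * A^2"
    using zero_le_square[of "H - A"] by (simp add: power2_eq_square algebra_simps)
  also have "A^2 \<le> (2 / (\<xi>^2 * w))^2" using A by (intro power_mono) auto
  also have "(2 / (\<xi>^2 * w))^2 = 4 / w^2 * (1/\<xi>^4)"
    by (simp add: field_simps eval_nat_numeral)
  finally show ?thesis by (simp add: H_def w_def)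
qed

text \<open>Beyond L = w_K^-2 the spectrum has L^2 mass O(w_K^4): the first K+1 kernels
  contribute through their 1/xi^2 decay, the remaining ones through the L^2 bound for
  triangle series applied to the shifted widths, whose square roots sum to at most
  2 sqrt (w_(K+1)) = 2 w_K^2.\<close>
lemma spikes_spectrum_tail:
  fixes K :: nat
  defines "L \<equiv> 1 / spike_width K ^ 2"
  shows "(\<integral>\<^sup>+\<xi>. indicator {\<xi>. L \<le> \<bar>\<xi>\<bar>} \<xi> * ennreal (norm (spikes_spectrum \<xi>))^2 \<partial>lborel)
           \<le> ennreal (38 * spike_width K ^ 4)"
proof -
  define w where "w = spike_width K"
  have w: "0 < w" "w \<le> 1" using spike_width_pos spike_width_le_1 by (auto simp: w_def)
  have L: "0 < L" using w by (simp add: L_def w_def)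
  interpret tail: triangle_series "\<lambda>_. 1" "\<lambda>k. spike_width (k + Suc K)"
    using spiky.shift[of "Suc K"] .
  define H where "H \<xi> = fejer_series (\<lambda>_. 1) (\<lambda>k. spike_width (k + Suc K)) (\<lambda>_. 0) \<xi>" for \<xi>
  define S where "S = (\<Sum>k. sqrt (spike_width (k + Suc K)))"
  have H_nonneg: "0 \<le> H \<xi>" for \<xi> unfolding H_def by (rule tail.fejer_series_nonneg)
  have H_ennreal: "ennreal (H \<xi>) = (\<Sum>k. ennreal (fejer (spike_width (k + Suc K)) \<xi>))" for \<xi>
    using tail.norm_fejer_series[of "\<lambda>_. 0" \<xi>] H_nonneg[of \<xi>] by (simp add: H_def)
  have pointwise: "indicator {\<xi>. L \<le> \<bar>\<xi>\<bar>} \<xi> * ennreal (norm (spikes_spectrum \<xi>))^2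
      \<le> ennreal (8 / w^2) * (indicator {\<xi>. L \<le> \<bar>\<xi>\<bar>} \<xi> * ennreal (1/\<xi>^4)) + 2 * ennreal (H \<xi>)^2" for \<xi>
  proof (cases "L \<le> \<bar>\<xi>\<bar>")
    case True
    then have "\<xi> \<noteq> 0" using L by auto
    have "norm (spikes_spectrum \<xi>)^2 \<le> 8 / w^2 * (1/\<xi>^4) + 2 * H \<xi>^2"
      unfolding H_def w_def by (rule spikes_spectrum_square_le[OF \<open>\<xi> \<noteq> 0\<close>])
    then have "ennreal (norm (spikes_spectrum \<xi>))^2 \<le> ennreal (8 / w^2) * ennreal (1/\<xi>^4) + 2 * ennreal (H \<xi>)^2"
      using w H_nonneg[of \<xi>] by (intro ennreal_square_le) (auto simp: zero_le_even_power)
    then show ?thesis using True by simp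
  qed simp
  have "(\<integral>\<^sup>+\<xi>. indicator {\<xi>. L \<le> \<bar>\<xi>\<bar>} \<xi> * ennreal (norm (spikes_spectrum \<xi>))^2 \<partial>lborel)
      \<le> (\<integral>\<^sup>+\<xi>. ennreal (8 / w^2) * (indicator {\<xi>. L \<le> \<bar>\<xi>\<bar>} \<xi> * ennreal (1/\<xi>^4))
             + 2 * ennreal (H \<xi>)^2 \<partial>lborel)"
    by (rule nn_integral_mono) (rule pointwise)
  also have "\<dots> = ennreal (8 / w^2) * ennreal (2 / (3 * L^3))
      + 2 * (\<integral>\<^sup>+\<xi>. (\<Sum>k. ennreal (fejer (spike_width (k + Suc K)) \<xi>))^2 \<partial>lborel)"
    unfolding H_ennreal using L
    by (subst nn_integral_add) (auto simp: nn_integral_cmult tail_integral_inverse_fourth)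
  also have "\<dots> \<le> ennreal (8 / w^2) * ennreal (2 / (3 * L^3)) + 2 * ennreal (4 * S^2)"
    using tail.spectrum_square_integral_le[of "\<lambda>_. 0"]
    by (intro add_left_mono mult_left_mono) (simp_all add: S_def)
  also have "\<dots> = ennreal (16 / 3 * w^4 + 8 * S^2)"
    using w L
    by (simp add: ennreal_mult[symmetric] numeral_mult_ennreal ennreal_plus[symmetric]
        del: ennreal_numeral ennreal_plus)
       (simp add: L_def w_def field_simps eval_nat_numeral)
  also have "\<dots> \<le> ennreal (38 * w^4)"
    using sqrt_spike_width_tail_square[of K] zero_le_power[OF less_imp_le[OF w(1)], of 4]
    unfolding S_def w_def by (intro ennreal_leI) linarith
  finally show ?thesis by (simp add: w_def)
qed

text \<open>Since the function vanishes for |t| \<ge> 1, (*) with R = 1 and L = w_K^-2 would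
  demand spectral mass at least C w_K^2 beyond L, but there is only O(w_K^4).\<close>
lemma spikes_not_cond_star: "\<not> cond_star spikes spikes_spectrum"
proof
  assume "cond_star spikes spikes_spectrum"
  then obtain C where C: "C > 0" and star: "\<And>R L. R \<ge> 1 \<Longrightarrow> L \<ge> 1 \<Longrightarrow>
     (\<integral>\<^sup>+t. indicator {t. \<bar>t\<bar> \<ge> R} t * ennreal (norm (spikes t)) ^ 2 \<partial>lborel)
     + (\<integral>\<^sup>+\<xi>. indicator {\<xi>. \<bar>\<xi>\<bar> \<ge> L} \<xi> * ennreal (norm (spikes_spectrum \<xi>)) ^ 2 \<partial>lborel)
     \<ge> ennreal (C / (R * L))"
    unfolding cond_star_def by blast
  obtain K where K: "(1/4::real)^K < C / 38" using real_arch_pow_inv[of "C/38" "1/4"] C by auto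
  define w where "w = spike_width K"
  define L where "L = 1 / w^2"
  have w: "0 < w" "w \<le> 1" using spike_width_pos spike_width_le_1 by (auto simp: w_def)
  have L: "1 \<le> L" using w by (simp add: L_def power_le_one)
  have no_time_tail: "(\<integral>\<^sup>+t. indicator {t. \<bar>t\<bar> \<ge> 1} t * ennreal (norm (spikes t)) ^ 2 \<partial>lborel) = 0"
  proof -
    have "(\<lambda>t. indicator {t. \<bar>t\<bar> \<ge> 1} t * ennreal (norm (spikes t)) ^ 2) = (\<lambda>t. 0)"
      by (rule ext) (simp add: indicator_def spikes_def spiky.tri_series_vanishes)
    then show ?thesis by simp
  qed
  have "ennreal (C / (1 * L))
      \<le> (\<integral>\<^sup>+\<xi>. indicator {\<xi>. \<bar>\<xi>\<bar> \<ge> L} \<xi> * ennreal (norm (spikes_spectrum \<xi>)) ^ 2 \<partial>lborel)"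
    using star[OF order_refl L] no_time_tail by simp
  also have "\<dots> \<le> ennreal (38 * w^4)"
    using spikes_spectrum_tail[of K] by (simp add: L_def w_def)
  also have "38 * w^4 < C / (1 * L)"
  proof -
    have "w^2 \<le> w" using w by (simp add: power2_eq_square mult_left_le)
    also have "\<dots> \<le> (1/4)^K" unfolding w_def by (rule spike_width_le_geometric)
    finally have "38 * w^2 < C" using K by simp
    then have "38 * w^2 * w^2 < C * w^2" using w by simp
    then show ?thesis by (simp add: L_def eval_nat_numeral field_simps)
  qed
  then have "ennreal (38 * w^4) < ennreal (C / (1 * L))"
    using C L by (intro ennreal_lessI) auto
  finally show False by simp
qed

theorem mainTheorem8:
  shows "(\<exists>g G. square_integrable g \<and> is_L2_fourier g G \<and>
            cond_star g G \<and> \<not> cond_star_star g G)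
       \<and> (\<exists>g G. square_integrable g \<and> is_L2_fourier g G \<and>
            cond_star_star g G \<and> \<not> cond_star g G)"
proof
  show "\<exists>g G. square_integrable g \<and> is_L2_fourier g G \<and> cond_star g G \<and> \<not> cond_star_star g G"
    using lac_L2 lac_cond_star lac_not_cond_star_star by blast
  show "\<exists>g G. square_integrable g \<and> is_L2_fourier g G \<and> cond_star_star g G \<and> \<not> cond_star g G"
    using spikes_L2 spikes_cond_star_star spikes_not_cond_star by blast
qed

end
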